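(* Let $H,S,A,T$ be positive integers, let $\delta>0$, and write $L:=\log(2HSAT/\delta)$. Let $\mathcal{M}=(\{1,\dots,H\},\mathcal{S},\mathcal{A},R,P)$ (target) and $\mathcal{M}_0=(\{1,\dots,H\},\mathcal{S},\mathcal{A},R_0,P_0)$ (historical) be finite-horizon MDPs with a common state space $\mathcal{S}$ of $S$ states and action space $\mathcal{A}$ of $A$ actions, all random rewards taking values in $[0,1]$, with mean rewards $r,r_0$ and transition probability vectors $P(\cdot;h,s,a),P_0(\cdot;h,s,a)$. Assume there is $\Delta>0$ with $|r(h,s,a)-r_0(h,s,a)|\le\Delta$ and $\|P(\cdot;h,s,a)-P_0(\cdot;h,s,a)\|_1\le\Delta$ for all $(h,s,a)$. Let $V^*_{h+1}\in\mathbb{R}^{\mathcal S}$ be the optimal value-to-go of $\mathcal{M}$ from epoch $h+1$ (see context). Fix a triple $(h,s,a)$, integers $n\ge 1$ and $N\ge 0$. Let $(R_k,S'_k)_{k=1}^n$ be i.i.d. with $R_k\sim R(h,s,a)$ and $S'_k\sim P(\cdot;h,s,a)$, and $(R^0_j,S^{0}_j)_{j=1}^N$ i.i.d. with $R^0_j\sim R_0(h,s,a)$, $S^0_j\sim P_0(\cdot;h,s,a)$, the two samples being independent. Let $\bar r_n,\bar P_n$ be the empirical mean reward and empirical next-state distribution of the target sample and $\bar r_0,\bar P_0$ those of the historical sample. Define $$\lambda^{DP}_{n,N}=\begin{cases}\dfrac{n+Nn\Delta/\sqrt{(N+n)L/2-\Delta^2Nn}}{N+n}, & n<L/(2\Delta^2),\\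 1,& \text{otherwise},\end{cases}$$ and the data-pooling estimators $\hat r^{DP}_n=\lambda^{DP}_{n,N}\bar r_n+(1-\lambda^{DP}_{n,N})\bar r_0$, $\hat P^{DP}_n=\lambda^{DP}_{n,N}\bar P_n+(1-\lambda^{DP}_{n,N})\bar P_0$. Then there exist nonnegative numbers $\varepsilon^{DP}_R(n,N),\varepsilon^{DP}_P(n,N),\varepsilon^{DP}_V(n,N)$ which are confidence radii for $(\hat r^{DP}_n,\hat P^{DP}_n)$, i.e. $$\mathbb{P}\big(|\hat r^{DP}_n-r(h,s,a)|>\varepsilon^{DP}_R(n,N)\big)<\tfrac{\delta}{HSAT},\qquad \mathbb{P}\big(\|\hat P^{DP}_n-P(\cdot;h,s,a)\|_1>\varepsilon^{DP}_P(n,N)\big)<\tfrac{\delta}{HSAT},$$ $$\mathbb{P}\Big(\big|\hat r^{DP}_n-r(h,s,a)+\langle \hat P^{DP}_n-P(\cdot;h,s,a),V^*_{h+1}\rangle\big|>\varepsilon^{DP}_V(n,N)\Big)<\tfrac{\delta}{HSAT},$$ and such that $\varepsilon^{DP}_R(n,N)\le\varepsilon^H_R(n)$, $\varepsilon^{DP}_P(n,N)\le\varepsilon^H_P(n)$, $\varepsilon^{DP}_V(n,N)\le\varepsilon^H_V(n)$, where $\varepsilon^H_R(n)=\sqrt{L/(2n)}$, $\varepsilon^H_P(n)=\sqrt{2(S\log 2+L)/n}$, $\varepsilon^H_V(n)=H\sqrt{L/(2n)}$. Moreover these three inequalities are strict when $n<L/(2\Delta^2)$ and $N\ge 1$.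
   Context: For a finite-horizon MDP with epochs $1,\dots,H$, the optimal Q-function is defined by $Q^*(H+1,\cdot,\cdot)\equiv 0$ and $Q^*(h,s,a)=r(h,s,a)+\sum_{s'}P(s';h,s,a)\max_{y\in\mathcal A}Q^*(h+1,s',y)$; the optimal value-to-go is $V^*_{h+1}(s')=\max_{y\in\mathcal A}Q^*(h+1,s',y)$ (computed in the target MDP $\mathcal M$). When $N=0$ the formula gives $\lambda^{DP}_{n,0}=1$, so $\bar r_0,\bar P_0$ do not enter. *)

theory Defs
  imports "HOL-Probability.Probability"
begin

text \<open>Optimal Q-function of a finite-horizon MDP with epochs 1..H, mean rewards r and
  transition kernels P. Qrem m h s a is the Q-value at epoch h when m epochs remain
  (m = H + 1 - h); Qrem 0 = 0 corresponds to Q*(H+1,.,.) = 0.\<close>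
fun Qrem :: "(nat \<Rightarrow> 's::finite \<Rightarrow> 'a::finite \<Rightarrow> real) \<Rightarrow> (nat \<Rightarrow> 's \<Rightarrow> 'a \<Rightarrow> 's pmf)
              \<Rightarrow> nat \<Rightarrow> nat \<Rightarrow> 's \<Rightarrow> 'a \<Rightarrow> real" where
  "Qrem r P 0 h s a = 0"
| "Qrem r P (Suc m) h s a =
     r h s a + (\<Sum>s'\<in>UNIV. pmf (P h s a) s' * (MAX y\<in>UNIV. Qrem r P m (Suc h) s' y))"

definition Qstar :: "nat \<Rightarrow> (nat \<Rightarrow> 's::finite \<Rightarrow> 'a::finite \<Rightarrow> real) \<Rightarrow> (nat \<Rightarrow> 's \<Rightarrow> 'a \<Rightarrow> 's pmf)
              \<Rightarrow> nat \<Rightarrow> 's \<Rightarrow> 'a \<Rightarrow> real" where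
  "Qstar H r P h s a = Qrem r P (H + 1 - h) h s a"

definition Vstar :: "nat \<Rightarrow> (nat \<Rightarrow> 's::finite \<Rightarrow> 'a::finite \<Rightarrow> real) \<Rightarrow> (nat \<Rightarrow> 's \<Rightarrow> 'a \<Rightarrow> 's pmf)
              \<Rightarrow> nat \<Rightarrow> 's \<Rightarrow> real" where
  "Vstar H r P h s = (MAX y\<in>(UNIV::'a set). Qstar H r P h s y)"

definition mean_reward :: "real measure \<Rightarrow> real" where
  "mean_reward M = (\<integral>x. x \<partial>M)"

definition sample_space ::
  "nat \<Rightarrow> nat \<Rightarrow> real measure \<Rightarrow> 's pmf \<Rightarrow> real measure \<Rightarrow> 's pmf
     \<Rightarrow> ((nat \<Rightarrow> real \<times> 's) \<times> (nat \<Rightarrow> real \<times> 's)) measure" where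
  "sample_space n N Rt Pt R0 P0 =
     (PiM {..<n} (\<lambda>_. Rt \<Otimes>\<^sub>M measure_pmf Pt)) \<Otimes>\<^sub>M (PiM {..<N} (\<lambda>_. R0 \<Otimes>\<^sub>M measure_pmf P0))"

definition emp_reward :: "nat \<Rightarrow> (nat \<Rightarrow> real \<times> 's) \<Rightarrow> real" where
  "emp_reward m \<omega> = (\<Sum>k<m. fst (\<omega> k)) / real m"

definition emp_dist :: "nat \<Rightarrow> (nat \<Rightarrow> real \<times> 's) \<Rightarrow> 's \<Rightarrow> real" where
  "emp_dist m \<omega> s' = real (card {k. k < m \<and> snd (\<omega> k) = s'}) / real m"

definition lambda_DP :: "real \<Rightarrow> real \<Rightarrow> nat \<Rightarrow> nat \<Rightarrow> real" where
  "lambda_DP L \<Delta> n N =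
     (if real n < L / (2 * \<Delta>^2)
      then (real n + real N * real n * \<Delta> / sqrt ((real N + real n) * L / 2 - \<Delta>^2 * real N * real n))
           / (real N + real n)
      else 1)"

definition r_DP :: "real \<Rightarrow> real \<Rightarrow> nat \<Rightarrow> nat \<Rightarrow> (nat \<Rightarrow> real \<times> 's) \<times> (nat \<Rightarrow> real \<times> 's) \<Rightarrow> real" where
  "r_DP L \<Delta> n N \<omega> =
     lambda_DP L \<Delta> n N * emp_reward n (fst \<omega>) + (1 - lambda_DP L \<Delta> n N) * emp_reward N (snd \<omega>)"

definition P_DP :: "real \<Rightarrow> real \<Rightarrow> nat \<Rightarrow> nat \<Rightarrow> (nat \<Rightarrow> real \<times> 's) \<times> (nat \<Rightarrow> real \<times> 's) \<Rightarrow> 's \<Rightarrow> real" where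
  "P_DP L \<Delta> n N \<omega> s' =
     lambda_DP L \<Delta> n N * emp_dist n (fst \<omega>) s' + (1 - lambda_DP L \<Delta> n N) * emp_dist N (snd \<omega>) s'"

end

theory Submission
  imports Defs
begin

text \<open>
  The data-pooling estimators are weighted means of \<open>n\<close> target and \<open>N\<close> historical
  observations with weights \<open>\<lambda>/n\<close> and \<open>(1 - \<lambda>)/N\<close>. Hoeffding's inequality for such a sum
  shows that, with probability at least \<open>1 - 2 exp (- L)\<close>, they lie within
  \<open>sqrt (L / 2) * \<sigma>\<close> of their mean, where \<open>\<sigma>\<^sup>2 = \<lambda>\<^sup>2 / n + (1 - \<lambda>)\<^sup>2 / N\<close>; for the
  \<open>L\<^sub>1\<close> error of the transition estimate a union bound over the \<open>2\<^sup>S\<close> sets of states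
  adds \<open>S ln 2\<close> to \<open>L\<close>. The mean is a mixture of the target and historical parameters,
  hence within \<open>(1 - \<lambda>) \<Delta>\<close> of the target. This gives radii \<open>(1 - \<lambda>) \<Delta> + c \<sigma>\<close>, which
  for \<open>\<lambda> = 1\<close> are the Hoeffding radii \<open>c / sqrt n\<close>. For the weight \<open>\<lambda>\<^sup>D\<^sup>P\<close> one has
  \<open>\<sigma> = c / D\<close> with \<open>D = sqrt ((N + n) c\<^sup>2 - \<Delta>\<^sup>2 N n)\<close>, and a direct computation shows that the
  radius is then strictly smaller than \<open>c / sqrt n\<close> as soon as \<open>\<Delta>\<^sup>2 n < c\<^sup>2\<close> and \<open>N \<ge> 1\<close>.
  All probability bounds are strict because Markov's inequality is applied to \<open>exp (l (Y - t))\<close>,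
  which lies strictly above the indicator of \<open>Y > t\<close>.
\<close>

lemma sum_abs_eq_twice_sum_nonneg:
  fixes x :: "'a \<Rightarrow> real"
  assumes "finite S" and "(\<Sum>s\<in>S. x s) = 0"
  shows "(\<Sum>s\<in>S. \<bar>x s\<bar>) = 2 * (\<Sum>s\<in>{s\<in>S. 0 \<le> x s}. x s)"
proof -
  have split: "(\<Sum>s\<in>S. f s) = (\<Sum>s\<in>{s\<in>S. 0 \<le> x s}. f s) + (\<Sum>s\<in>{s\<in>S. x s < 0}. f s)"
    for f :: "'a \<Rightarrow> real"
    using sum.Int_Diff[OF assms(1), of f "{s. 0 \<le> x s}"] by (simp add: Int_def set_diff_eq not_le)
  show ?thesis
    using split[of x] split[of "\<lambda>s. \<bar>x s\<bar>"] assms(2) by (simp add: sum_negf)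
qed

lemma (in prob_space) prob_gt_less_exp_mgf:
  assumes [measurable]: "Y \<in> borel_measurable M" and "l > 0"
    and mgf: "(\<integral>\<^sup>+x. ennreal (exp (l * Y x)) \<partial>M) \<le> ennreal B"
  shows "prob {x\<in>space M. Y x > t} < exp (- l * t) * B"
proof -
  let ?E = "{x\<in>space M. Y x > t}"
  have pos: "indicator ?E x < ennreal (exp (l * (Y x - t)))" if "x \<in> space M" for x
    using \<open>l > 0\<close> that by (auto simp: indicator_def)
  have "emeasure M ?E = (\<integral>\<^sup>+x. indicator ?E x \<partial>M)" by simp
  also have "\<dots> < (\<integral>\<^sup>+x. ennreal (exp (l * (Y x - t))) \<partial>M)"
  proof (rule nn_integral_less)
    show "AE x in M. indicator ?E x \<le> ennreal (exp (l * (Y x - t)))"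
      using pos by (auto intro!: AE_I2 less_imp_le)
    show "\<not> (AE x in M. ennreal (exp (l * (Y x - t))) \<le> indicator ?E x)"
    proof
      assume "AE x in M. ennreal (exp (l * (Y x - t))) \<le> indicator ?E x"
      with AE_space have "AE x in M. False"
        by eventually_elim (use pos in \<open>force simp: not_le\<close>)
      then show False by simp
    qed
  qed auto
  also have "\<dots> = ennreal (exp (- l * t)) * (\<integral>\<^sup>+x. ennreal (exp (l * Y x)) \<partial>M)"
    by (subst nn_integral_cmult[symmetric])
       (auto intro!: nn_integral_cong simp: right_diff_distrib simp flip: ennreal_mult' exp_add)
  also have "\<dots> \<le> ennreal (exp (- l * t) * B)"
    using mgf by (simp add: ennreal_mult' mult_left_mono)
  finally show ?thesis
    by (metis emeasure_eq_measure ennreal_leI not_less)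
qed

lemma nn_integral_pair_measure_mult:
  assumes "sigma_finite_measure M2"
    and [measurable]: "F \<in> borel_measurable M1" "G \<in> borel_measurable M2"
  shows "(\<integral>\<^sup>+\<omega>. F (fst \<omega>) * G (snd \<omega>) \<partial>(M1 \<Otimes>\<^sub>M M2)) = integral\<^sup>N M1 F * integral\<^sup>N M2 G"
proof -
  interpret M2: sigma_finite_measure M2 by fact
  have "(\<integral>\<^sup>+\<omega>. F (fst \<omega>) * G (snd \<omega>) \<partial>(M1 \<Otimes>\<^sub>M M2)) = (\<integral>\<^sup>+x. \<integral>\<^sup>+y. F x * G y \<partial>M2 \<partial>M1)"
    by (subst M2.nn_integral_fst[symmetric]) auto
  also have "\<dots> = integral\<^sup>N M1 F * integral\<^sup>N M2 G"
    by (simp add: nn_integral_cmult nn_integral_multc)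
  finally show ?thesis .
qed

locale two_samples = M1: prob_space M1 + M2: prob_space M2
  for M1 M2 :: "'a measure" and n N :: nat
begin

abbreviation \<Omega> :: "((nat \<Rightarrow> 'a) \<times> (nat \<Rightarrow> 'a)) measure" where
  "\<Omega> \<equiv> PiM {..<n} (\<lambda>_. M1) \<Otimes>\<^sub>M PiM {..<N} (\<lambda>_. M2)"

sublocale S: prob_space \<Omega>
  by (intro prob_space_pair prob_space_PiM M1.prob_space_axioms M2.prob_space_axioms)

definition centered_sum :: "('a \<Rightarrow> real) \<Rightarrow> ('a \<Rightarrow> real) \<Rightarrow> (nat \<Rightarrow> 'a) \<times> (nat \<Rightarrow> 'a) \<Rightarrow> real" where
  "centered_sum f g \<omega> =
     (\<Sum>k<n. f (fst \<omega> k) - M1.expectation f) + (\<Sum>j<N. g (snd \<omega> j) - M2.expectation g)"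

lemma centered_sum_measurable [measurable]:
  assumes [measurable]: "f \<in> borel_measurable M1" "g \<in> borel_measurable M2"
  shows "centered_sum f g \<in> borel_measurable \<Omega>"
  unfolding centered_sum_def by measurable

lemma centered_sum_uminus: "centered_sum (\<lambda>x. - f x) (\<lambda>x. - g x) \<omega> = - centered_sum f g \<omega>"
  by (simp add: centered_sum_def sum_negf[symmetric] sum_subtractf)

lemma mgf_centered_sum_le:
  assumes [measurable]: "f \<in> borel_measurable M1" "g \<in> borel_measurable M2"
    and f: "AE x in M1. f x \<in> {a1..b1}" and g: "AE x in M2. g x \<in> {a2..b2}" and "l > 0"
  shows "(\<integral>\<^sup>+\<omega>. ennreal (exp (l * centered_sum f g \<omega>)) \<partial>\<Omega>)
         \<le> ennreal (exp (l\<^sup>2 * (real n * (b1 - a1)\<^sup>2 + real N * (b2 - a2)\<^sup>2) / 8))"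
proof -
  interpret B1: interval_bounded_random_variable M1 f a1 b1
    using f by unfold_locales simp_all
  interpret B2: interval_bounded_random_variable M2 g a2 b2
    using g by unfold_locales simp_all
  interpret P1: product_prob_space "\<lambda>_ :: nat. M1" by unfold_locales
  interpret P2: product_prob_space "\<lambda>_ :: nat. M2" by unfold_locales
  define F where "F x = ennreal (exp (l * (f x - M1.expectation f)))" for x
  define G where "G x = ennreal (exp (l * (g x - M2.expectation g)))" for x
  have [measurable]: "F \<in> borel_measurable M1" "G \<in> borel_measurable M2"
    unfolding F_def G_def by measurable
  have "(\<integral>\<^sup>+\<omega>. ennreal (exp (l * centered_sum f g \<omega>)) \<partial>\<Omega>)
      = (\<integral>\<^sup>+\<omega>. (\<Prod>k<n. F (fst \<omega> k)) * (\<Prod>j<N. G (snd \<omega> j)) \<partial>\<Omega>)"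
    by (simp add: centered_sum_def F_def G_def distrib_left sum_distrib_left exp_add exp_sum prod_ennreal
        ennreal_mult'' prod_nonneg)
  also have "\<dots> = (\<integral>\<^sup>+x. (\<Prod>k<n. F (x k)) \<partial>PiM {..<n} (\<lambda>_. M1))
                  * (\<integral>\<^sup>+y. (\<Prod>j<N. G (y j)) \<partial>PiM {..<N} (\<lambda>_. M2))"
    by (rule nn_integral_pair_measure_mult)
       (auto intro!: prob_space_imp_sigma_finite prob_space_PiM M2.prob_space_axioms)
  also have "\<dots> = (\<integral>\<^sup>+x. F x \<partial>M1) ^ n * (\<integral>\<^sup>+x. G x \<partial>M2) ^ N"
    using P1.product_nn_integral_prod[of "{..<n}" "\<lambda>_. F"]
      P2.product_nn_integral_prod[of "{..<N}" "\<lambda>_. G"] by simp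
  also have "\<dots> \<le> ennreal (exp (l\<^sup>2 * (b1 - a1)\<^sup>2 / 8)) ^ n * ennreal (exp (l\<^sup>2 * (b2 - a2)\<^sup>2 / 8)) ^ N"
    unfolding F_def G_def
    by (intro mult_mono power_mono B1.Hoeffdings_lemma_nn_integral B2.Hoeffdings_lemma_nn_integral)
       (use \<open>l > 0\<close> in auto)
  also have "\<dots> = ennreal (exp (l\<^sup>2 * (real n * (b1 - a1)\<^sup>2 + real N * (b2 - a2)\<^sup>2) / 8))"
    by (simp add: ennreal_power ennreal_mult'' add_divide_distrib algebra_simps
        flip: exp_of_nat_mult exp_add ennreal_mult')
  finally show ?thesis .
qed

lemma hoeffding_centered_sum_gt:
  assumes [measurable]: "f \<in> borel_measurable M1" "g \<in> borel_measurable M2"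
    and f: "AE x in M1. f x \<in> {a1..b1}" and g: "AE x in M2. g x \<in> {a2..b2}"
    and "t > 0" and D: "real n * (b1 - a1)\<^sup>2 + real N * (b2 - a2)\<^sup>2 > 0"
  shows "S.prob {\<omega>\<in>space \<Omega>. centered_sum f g \<omega> > t}
           < exp (- 2 * t\<^sup>2 / (real n * (b1 - a1)\<^sup>2 + real N * (b2 - a2)\<^sup>2))"
proof -
  define D where "D = real n * (b1 - a1)\<^sup>2 + real N * (b2 - a2)\<^sup>2"
  define l where "l = 4 * t / D"
  have "D > 0" "l > 0" using D \<open>t > 0\<close> by (auto simp: D_def l_def)
  have "S.prob {\<omega>\<in>space \<Omega>. centered_sum f g \<omega> > t} < exp (- l * t) * exp (l\<^sup>2 * D / 8)"
    using mgf_centered_sum_le[OF _ _ f g \<open>l > 0\<close>]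
    by (intro S.prob_gt_less_exp_mgf \<open>l > 0\<close>) (auto simp: D_def)
  also have "exp (- l * t) * exp (l\<^sup>2 * D / 8) = exp (- 2 * t\<^sup>2 / D)"
    \<comment> \<open>l = 4t/D minimises the Chernoff exponent\<close>
    using \<open>D > 0\<close> by (simp add: l_def power2_eq_square field_simps flip: exp_add)
  finally show ?thesis by (simp add: D_def)
qed

lemma hoeffding_centered_sum_abs_gt:
  assumes [measurable]: "f \<in> borel_measurable M1" "g \<in> borel_measurable M2"
    and f: "AE x in M1. f x \<in> {a1..b1}" and g: "AE x in M2. g x \<in> {a2..b2}"
    and "t \<ge> 0" and D: "real n * (b1 - a1)\<^sup>2 + real N * (b2 - a2)\<^sup>2 > 0"
  shows "S.prob {\<omega>\<in>space \<Omega>. \<bar>centered_sum f g \<omega>\<bar> > t}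
           < 2 * exp (- 2 * t\<^sup>2 / (real n * (b1 - a1)\<^sup>2 + real N * (b2 - a2)\<^sup>2))"
proof (cases "t = 0")
  case True
  then show ?thesis by (intro order.strict_trans1[OF S.prob_le_1]) simp
next
  case False
  with \<open>t \<ge> 0\<close> have "t > 0" by simp
  have f': "AE x in M1. - f x \<in> {- b1..- a1}" and g': "AE x in M2. - g x \<in> {- b2..- a2}"
    using f g by auto
  have "S.prob {\<omega>\<in>space \<Omega>. \<bar>centered_sum f g \<omega>\<bar> > t}
      \<le> S.prob {\<omega>\<in>space \<Omega>. centered_sum f g \<omega> > t}
        + S.prob {\<omega>\<in>space \<Omega>. centered_sum (\<lambda>x. - f x) (\<lambda>x. - g x) \<omega> > t}"
  proof -
    have "{\<omega>\<in>space \<Omega>. \<bar>centered_sum f g \<omega>\<bar> > t}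
        = {\<omega>\<in>space \<Omega>. centered_sum f g \<omega> > t} \<union> {\<omega>\<in>space \<Omega>. - centered_sum f g \<omega> > t}"
      by auto
    then show ?thesis
      unfolding centered_sum_uminus by (auto intro!: measure_Un_le)
  qed
  also have "\<dots> < 2 * exp (- 2 * t\<^sup>2 / (real n * (b1 - a1)\<^sup>2 + real N * (b2 - a2)\<^sup>2))"
    using hoeffding_centered_sum_gt[OF _ _ f g \<open>t > 0\<close> D]
      hoeffding_centered_sum_gt[OF _ _ f' g' \<open>t > 0\<close>] D
    by (simp add: power2_commute)
  finally show ?thesis .
qed

end

text \<open>The sum of the squared observation weights of \<open>pooled_mean\<close>. For \<open>N = 0\<close> the historical
  terms of both vanish (\<open>x / 0 = 0\<close>), which is why \<open>N = 0\<close> forces weight \<open>w = 1\<close> below.\<close>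

definition pool_var :: "real \<Rightarrow> nat \<Rightarrow> nat \<Rightarrow> real" where
  "pool_var w n N = w\<^sup>2 / real n + (1 - w)\<^sup>2 / real N"

definition pooled_mean :: "real \<Rightarrow> nat \<Rightarrow> nat \<Rightarrow> ('a \<Rightarrow> real) \<Rightarrow> (nat \<Rightarrow> 'a) \<times> (nat \<Rightarrow> 'a) \<Rightarrow> real" where
  "pooled_mean w n N \<phi> \<omega> =
     w * (\<Sum>k<n. \<phi> (fst \<omega> k)) / real n + (1 - w) * (\<Sum>j<N. \<phi> (snd \<omega> j)) / real N"

lemma pool_var_pos:
  assumes "n \<ge> 1" and "N = 0 \<Longrightarrow> w = 1"
  shows "pool_var w n N > 0"
  using assms by (cases "w = 0") (auto simp: pool_var_def intro: add_pos_nonneg add_nonneg_pos)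

lemma AE_scaled_in_range:
  fixes f :: "'a \<Rightarrow> real"
  assumes "AE x in M. f x \<in> {a..b}" and "c \<ge> 0"
  shows "AE x in M. c * f x \<in> {c * a..c * b}"
  using assms(1) by eventually_elim (auto intro!: mult_left_mono assms(2))

context two_samples
begin

lemma pooled_mean_measurable [measurable]:
  assumes [measurable]: "\<phi> \<in> borel_measurable M1" "\<phi> \<in> borel_measurable M2"
  shows "pooled_mean w n N \<phi> \<in> borel_measurable \<Omega>"
  unfolding pooled_mean_def by measurable

lemma centered_sum_scaled:
  "centered_sum (\<lambda>x. c1 * f x) (\<lambda>x. c2 * g x) \<omega>
     = c1 * ((\<Sum>k<n. f (fst \<omega> k)) - real n * M1.expectation f)
       + c2 * ((\<Sum>j<N. g (snd \<omega> j)) - real N * M2.expectation g)"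
  by (simp add: centered_sum_def sum_subtractf sum_distrib_left right_diff_distrib)

lemma pooled_mean_minus_mean:
  assumes "n \<ge> 1" and "N = 0 \<Longrightarrow> w = 1"
  shows "pooled_mean w n N \<phi> \<omega> - (w * M1.expectation \<phi> + (1 - w) * M2.expectation \<phi>)
       = centered_sum (\<lambda>x. w / n * \<phi> x) (\<lambda>x. (1 - w) / N * \<phi> x) \<omega>"
proof -
  have "w / n * (A - n * E) = w * A / n - w * E" for A E :: real
    using assms(1) by (simp add: field_simps)
  moreover have "(1 - w) / N * (B - N * E) = (1 - w) * B / N - (1 - w) * E" for B E :: real
    using assms(2) by (cases "N = 0") (simp_all add: field_simps)
  ultimately show ?thesis
    unfolding centered_sum_scaled pooled_mean_def by simp
qed

lemma scaled_ranges_eq_pool_var: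
  assumes "n \<ge> 1"
  shows "real n * (w / n * b - w / n * a)\<^sup>2 + real N * ((1 - w) / N * b - (1 - w) / N * a)\<^sup>2
       = (b - a)\<^sup>2 * pool_var w n N"
  using assms by (cases "N = 0") (auto simp: pool_var_def power2_eq_square field_simps)

lemma hoeffding_pooled_mean_gt:
  assumes [measurable]: "\<phi> \<in> borel_measurable M1" "\<phi> \<in> borel_measurable M2"
    and "AE x in M1. \<phi> x \<in> {a..b}" "AE x in M2. \<phi> x \<in> {a..b}" and "a < b"
    and n: "n \<ge> 1" and "0 \<le> w" "w \<le> 1" and w: "N = 0 \<Longrightarrow> w = 1" and "t > 0"
  shows "S.prob {\<omega>\<in>space \<Omega>.
           pooled_mean w n N \<phi> \<omega> - (w * M1.expectation \<phi> + (1 - w) * M2.expectation \<phi>) > t}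
         < exp (- 2 * t\<^sup>2 / ((b - a)\<^sup>2 * pool_var w n N))"
proof -
  have "S.prob {\<omega>\<in>space \<Omega>. centered_sum (\<lambda>x. w / n * \<phi> x) (\<lambda>x. (1 - w) / N * \<phi> x) \<omega> > t}
        < exp (- 2 * t\<^sup>2 / (real n * (w / n * b - w / n * a)\<^sup>2
                               + real N * ((1 - w) / N * b - (1 - w) / N * a)\<^sup>2))"
    using assms pool_var_pos[of n N w]
    by (intro hoeffding_centered_sum_gt AE_scaled_in_range) (simp_all only: scaled_ranges_eq_pool_var, auto)
  then show ?thesis
    by (simp only: pooled_mean_minus_mean[OF n w] scaled_ranges_eq_pool_var[OF n])
qed

lemma hoeffding_pooled_mean_abs_gt:
  assumes [measurable]: "\<phi> \<in> borel_measurable M1" "\<phi> \<in> borel_measurable M2"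
    and "AE x in M1. \<phi> x \<in> {a..b}" "AE x in M2. \<phi> x \<in> {a..b}" and "a < b"
    and n: "n \<ge> 1" and "0 \<le> w" "w \<le> 1" and w: "N = 0 \<Longrightarrow> w = 1" and "t \<ge> 0"
  shows "S.prob {\<omega>\<in>space \<Omega>.
           \<bar>pooled_mean w n N \<phi> \<omega> - (w * M1.expectation \<phi> + (1 - w) * M2.expectation \<phi>)\<bar> > t}
         < 2 * exp (- 2 * t\<^sup>2 / ((b - a)\<^sup>2 * pool_var w n N))"
proof -
  have "S.prob {\<omega>\<in>space \<Omega>. \<bar>centered_sum (\<lambda>x. w / n * \<phi> x) (\<lambda>x. (1 - w) / N * \<phi> x) \<omega>\<bar> > t}
        < 2 * exp (- 2 * t\<^sup>2 / (real n * (w / n * b - w / n * a)\<^sup>2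
                                   + real N * ((1 - w) / N * b - (1 - w) / N * a)\<^sup>2))"
    using assms pool_var_pos[of n N w]
    by (intro hoeffding_centered_sum_abs_gt AE_scaled_in_range) (simp_all only: scaled_ranges_eq_pool_var, auto)
  then show ?thesis
    by (simp only: pooled_mean_minus_mean[OF n w] scaled_ranges_eq_pool_var[OF n])
qed

end

lemma (in prob_space) prob_abs_diff_gt_shift:
  fixes X :: "'a \<Rightarrow> real"
  assumes [measurable]: "X \<in> borel_measurable M" and "\<bar>m - m'\<bar> \<le> b"
    and "prob {x\<in>space M. \<bar>X x - m\<bar> > t} < B"
  shows "prob {x\<in>space M. \<bar>X x - m'\<bar> > b + t} < B"
proof -
  have "prob {x\<in>space M. \<bar>X x - m'\<bar> > b + t} \<le> prob {x\<in>space M. \<bar>X x - m\<bar> > t}"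
  proof (rule finite_measure_mono)
    show "{x\<in>space M. \<bar>X x - m'\<bar> > b + t} \<subseteq> {x\<in>space M. \<bar>X x - m\<bar> > t}"
      using assms(2) by auto
  qed measurable
  then show ?thesis using assms(3) by simp
qed

lemma sum_emp_dist_mult:
  fixes V :: "'s::finite \<Rightarrow> real"
  shows "(\<Sum>s\<in>UNIV. emp_dist m x s * V s) = (\<Sum>k<m. V (snd (x k))) / real m"
proof -
  have "(\<Sum>k<m. V (snd (x k))) = (\<Sum>s\<in>UNIV. \<Sum>k\<in>{k\<in>{..<m}. snd (x k) = s}. V (snd (x k)))"
    by (rule sum.group[symmetric]) auto
  also have "\<dots> = (\<Sum>s\<in>UNIV. real (card {k. k < m \<and> snd (x k) = s}) * V s)"
    by (intro sum.cong refl) (simp add: Collect_conj_eq[symmetric])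
  finally show ?thesis
    by (simp add: emp_dist_def sum_divide_distrib)
qed

lemma sum_emp_dist:
  fixes x :: "nat \<Rightarrow> real \<times> 's::finite"
  shows "m \<ge> 1 \<Longrightarrow> (\<Sum>s\<in>UNIV. emp_dist m x s) = 1"
  using sum_emp_dist_mult[of m x "\<lambda>_. 1"] by simp

lemma distr_pair_snd:
  assumes "prob_space M" "prob_space N"
  shows "distr (M \<Otimes>\<^sub>M N) N snd = N"
proof (intro measure_eqI)
  interpret M: prob_space M by fact
  interpret N: prob_space N by fact
  fix A assume A: "A \<in> sets (distr (M \<Otimes>\<^sub>M N) N snd)"
  then have "emeasure (distr (M \<Otimes>\<^sub>M N) N snd) A = emeasure (M \<Otimes>\<^sub>M N) (space M \<times> A)"
    by (auto simp: emeasure_distr space_pair_measure dest: sets.sets_into_space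
        intro!: arg_cong2[where f = emeasure])
  with A show "emeasure (distr (M \<Otimes>\<^sub>M N) N snd) A = emeasure N A"
    by (simp add: N.emeasure_pair_measure_Times M.emeasure_space_1)
qed simp

locale reward_distribution =
  fixes R :: "real measure"
  assumes prob: "prob_space R" and sets_eq: "sets R = sets borel"
    and range: "AE x in R. 0 \<le> x \<and> x \<le> 1"
begin

sublocale B: interval_bounded_random_variable R "\<lambda>x. x" 0 1
  using prob range measurable_ident_sets[OF sets_eq]
  by (intro interval_bounded_random_variable.intro interval_bounded_random_variable_axioms.intro) auto

lemma observation_prob_space: "prob_space (R \<Otimes>\<^sub>M measure_pmf q)"
  by (intro prob_space_pair prob prob_space_measure_pmf)

lemma observation_measurable [measurable]:
  "(\<lambda>z. \<alpha> * fst z + V (snd z)) \<in> borel_measurable (R \<Otimes>\<^sub>M measure_pmf q)"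
proof -
  have [measurable]: "fst \<in> borel_measurable (R \<Otimes>\<^sub>M measure_pmf q)"
    by (rule measurable_compose[OF measurable_fst B.random_variable])
  have [measurable]: "V \<in> borel_measurable (measure_pmf q)"
    by simp
  show ?thesis by measurable
qed

lemma observation_reward_in_unit: "AE z in R \<Otimes>\<^sub>M measure_pmf q. 0 \<le> fst z \<and> fst z \<le> 1"
proof -
  have [measurable]: "{x \<in> space R. 0 \<le> x \<and> x \<le> 1} \<in> sets R"
    using sets_eq by simp
  have "AE x in distr (R \<Otimes>\<^sub>M measure_pmf q) R fst. 0 \<le> x \<and> x \<le> 1"
    unfolding prob_space.distr_pair_fst[OF prob_space_measure_pmf] by (rule range)
  then show ?thesis
    by (subst (asm) AE_distr_iff) auto
qed

lemma observation_in_range: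
  assumes "0 \<le> \<alpha>" and "\<And>s. 0 \<le> V s" and "\<And>s. \<alpha> + V s \<le> K"
  shows "AE z in R \<Otimes>\<^sub>M measure_pmf q. \<alpha> * fst z + V (snd z) \<in> {0..K}"
  using observation_reward_in_unit
proof eventually_elim
  case (elim z)
  then have "\<alpha> * fst z \<le> \<alpha>" "0 \<le> \<alpha> * fst z"
    using assms(1) by (simp_all add: mult_left_le)
  then show ?case
    using elim assms(2,3)[of "snd z"] by auto
qed

lemma mean_reward_bounds: "0 \<le> mean_reward R" "mean_reward R \<le> 1"
proof -
  show "0 \<le> mean_reward R"
    unfolding mean_reward_def by (rule integral_nonneg_AE) (use range in auto)
  have "mean_reward R \<le> integral\<^sup>L R (\<lambda>_. 1)"
    unfolding mean_reward_def by (rule integral_mono_AE) (use range in auto)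
  then show "mean_reward R \<le> 1"
    by (simp add: B.prob_space)
qed

lemma observation_expectation:
  fixes q :: "'s::finite pmf"
  shows "integral\<^sup>L (R \<Otimes>\<^sub>M measure_pmf q) (\<lambda>z. \<alpha> * fst z + V (snd z))
     = \<alpha> * mean_reward R + (\<Sum>s\<in>UNIV. pmf q s * V s)"
proof -
  have fst: "distr (R \<Otimes>\<^sub>M measure_pmf q) R fst = R"
    by (rule prob_space.distr_pair_fst[OF prob_space_measure_pmf])
  have snd: "distr (R \<Otimes>\<^sub>M measure_pmf q) (measure_pmf q) snd = measure_pmf q"
    by (rule distr_pair_snd[OF prob prob_space_measure_pmf])
  have "integrable (R \<Otimes>\<^sub>M measure_pmf q) fst"
    using integrable_distr_eq[OF measurable_fst, of "\<lambda>x. x" R "measure_pmf q"] B.integrable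
    unfolding fst by simp
  moreover have "integrable (R \<Otimes>\<^sub>M measure_pmf q) (\<lambda>z. V (snd z))"
    using integrable_distr_eq[OF measurable_snd, of V "measure_pmf q" R]
    unfolding snd by (simp add: integrable_measure_pmf_finite)
  moreover have "integral\<^sup>L (R \<Otimes>\<^sub>M measure_pmf q) fst = mean_reward R"
    using integral_distr[OF measurable_fst, of "\<lambda>x. x" R "measure_pmf q"]
    unfolding fst mean_reward_def by simp
  moreover have "integral\<^sup>L (R \<Otimes>\<^sub>M measure_pmf q) (\<lambda>z. V (snd z)) = (\<Sum>s\<in>UNIV. pmf q s * V s)"
    using integral_distr[OF measurable_snd, of V "measure_pmf q" R]
    unfolding snd by (simp add: integral_measure_pmf_real[where A = UNIV] mult.commute)
  ultimately show ?thesis by simp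
qed

end

locale pooled_estimation =
  R: reward_distribution R + R0: reward_distribution R0
  for R R0 :: "real measure" +
  fixes P P0 :: "'s::finite pmf" and n N :: nat and w \<Delta> :: real
  assumes n_pos: "n \<ge> 1" and weight_nonneg: "0 \<le> w" and weight_le_1: "w \<le> 1"
    and weight_no_history: "N = 0 \<Longrightarrow> w = 1"
    and reward_close: "\<bar>mean_reward R - mean_reward R0\<bar> \<le> \<Delta>"
    and transition_close: "(\<Sum>s\<in>UNIV. \<bar>pmf P s - pmf P0 s\<bar>) \<le> \<Delta>"
begin

sublocale two_samples "R \<Otimes>\<^sub>M measure_pmf P" "R0 \<Otimes>\<^sub>M measure_pmf P0" n N
  by (intro two_samples.intro R.observation_prob_space R0.observation_prob_space)

definition r_hat :: "(nat \<Rightarrow> real \<times> 's) \<times> (nat \<Rightarrow> real \<times> 's) \<Rightarrow> real" where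
  "r_hat \<omega> = w * emp_reward n (fst \<omega>) + (1 - w) * emp_reward N (snd \<omega>)"

definition P_hat :: "(nat \<Rightarrow> real \<times> 's) \<times> (nat \<Rightarrow> real \<times> 's) \<Rightarrow> 's \<Rightarrow> real" where
  "P_hat \<omega> s = w * emp_dist n (fst \<omega>) s + (1 - w) * emp_dist N (snd \<omega>) s"

lemma sample_space_eq: "sample_space n N R P R0 P0 = \<Omega>"
  by (simp add: sample_space_def)

lemma pooled_mean_observation:
  "pooled_mean w n N (\<lambda>z. \<alpha> * fst z + V (snd z)) \<omega> = \<alpha> * r_hat \<omega> + (\<Sum>s\<in>UNIV. P_hat \<omega> s * V s)"
proof -
  have "(\<Sum>s\<in>UNIV. P_hat \<omega> s * V s)
      = w * (\<Sum>s\<in>UNIV. emp_dist n (fst \<omega>) s * V s) + (1 - w) * (\<Sum>s\<in>UNIV. emp_dist N (snd \<omega>) s * V s)"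
    by (simp add: P_hat_def sum.distrib sum_distrib_left distrib_right mult.assoc)
  then show ?thesis
    by (simp add: pooled_mean_def r_hat_def emp_reward_def sum_emp_dist_mult sum.distrib
        add_divide_distrib distrib_left sum_distrib_left[symmetric] mult.left_commute)
qed

lemma sum_P_hat: "(\<Sum>s\<in>UNIV. P_hat \<omega> s) = 1"
proof -
  have "(\<Sum>s\<in>UNIV. P_hat \<omega> s)
      = w * (\<Sum>s\<in>UNIV. emp_dist n (fst \<omega>) s) + (1 - w) * (\<Sum>s\<in>UNIV. emp_dist N (snd \<omega>) s)"
    by (simp add: P_hat_def sum.distrib sum_distrib_left)
  then show ?thesis
    using n_pos weight_no_history by (cases "N = 0") (simp_all add: sum_emp_dist)
qed

lemma linear_estimate_measurable [measurable]:
  "(\<lambda>\<omega>. \<alpha> * r_hat \<omega> + (\<Sum>s\<in>UNIV. P_hat \<omega> s * V s)) \<in> borel_measurable \<Omega>"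
  unfolding pooled_mean_observation[symmetric] by measurable

lemma linear_estimate_abs_gt:
  assumes "0 \<le> \<alpha>" "\<And>s. 0 \<le> V s" "\<And>s. \<alpha> + V s \<le> K" "K > 0" "t \<ge> 0"
  shows "S.prob {\<omega>\<in>space \<Omega>. \<bar>\<alpha> * r_hat \<omega> + (\<Sum>s\<in>UNIV. P_hat \<omega> s * V s)
             - (w * (\<alpha> * mean_reward R + (\<Sum>s\<in>UNIV. pmf P s * V s))
                + (1 - w) * (\<alpha> * mean_reward R0 + (\<Sum>s\<in>UNIV. pmf P0 s * V s)))\<bar> > t}
         < 2 * exp (- 2 * t\<^sup>2 / (K\<^sup>2 * pool_var w n N))"
proof -
  let ?\<phi> = "\<lambda>z. \<alpha> * fst z + V (snd z)"
  have range: "AE z in R \<Otimes>\<^sub>M measure_pmf P. ?\<phi> z \<in> {0..K}" "AE z in R0 \<Otimes>\<^sub>M measure_pmf P0. ?\<phi> z \<in> {0..K}"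
    by (rule R.observation_in_range R0.observation_in_range; use assms in simp)+
  have "S.prob {\<omega>\<in>space \<Omega>.
          \<bar>pooled_mean w n N ?\<phi> \<omega> - (w * M1.expectation ?\<phi> + (1 - w) * M2.expectation ?\<phi>)\<bar> > t}
        < 2 * exp (- 2 * t\<^sup>2 / ((K - 0)\<^sup>2 * pool_var w n N))"
    by (rule hoeffding_pooled_mean_abs_gt)
       (use assms range n_pos weight_nonneg weight_le_1 weight_no_history in simp_all)
  then show ?thesis
    by (simp add: pooled_mean_observation R.observation_expectation R0.observation_expectation)
qed

lemma linear_estimate_gt:
  assumes "0 \<le> \<alpha>" "\<And>s. 0 \<le> V s" "\<And>s. \<alpha> + V s \<le> K" "K > 0" "t > 0"
  shows "S.prob {\<omega>\<in>space \<Omega>. \<alpha> * r_hat \<omega> + (\<Sum>s\<in>UNIV. P_hat \<omega> s * V s)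
             - (w * (\<alpha> * mean_reward R + (\<Sum>s\<in>UNIV. pmf P s * V s))
                + (1 - w) * (\<alpha> * mean_reward R0 + (\<Sum>s\<in>UNIV. pmf P0 s * V s))) > t}
         < exp (- 2 * t\<^sup>2 / (K\<^sup>2 * pool_var w n N))"
proof -
  let ?\<phi> = "\<lambda>z. \<alpha> * fst z + V (snd z)"
  have range: "AE z in R \<Otimes>\<^sub>M measure_pmf P. ?\<phi> z \<in> {0..K}" "AE z in R0 \<Otimes>\<^sub>M measure_pmf P0. ?\<phi> z \<in> {0..K}"
    by (rule R.observation_in_range R0.observation_in_range; use assms in simp)+
  have "S.prob {\<omega>\<in>space \<Omega>.
          pooled_mean w n N ?\<phi> \<omega> - (w * M1.expectation ?\<phi> + (1 - w) * M2.expectation ?\<phi>) > t}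
        < exp (- 2 * t\<^sup>2 / ((K - 0)\<^sup>2 * pool_var w n N))"
    by (rule hoeffding_pooled_mean_gt)
       (use assms range n_pos weight_nonneg weight_le_1 weight_no_history in simp_all)
  then show ?thesis
    by (simp add: pooled_mean_observation R.observation_expectation R0.observation_expectation)
qed

lemma value_mixture_bias:
  assumes "\<And>s. 0 \<le> V s" "\<And>s. V s \<le> B"
  shows "\<bar>w * (mean_reward R + (\<Sum>s\<in>UNIV. pmf P s * V s))
            + (1 - w) * (mean_reward R0 + (\<Sum>s\<in>UNIV. pmf P0 s * V s))
          - (mean_reward R + (\<Sum>s\<in>UNIV. pmf P s * V s))\<bar> \<le> (1 - w) * ((1 + B) * \<Delta>)"
proof -
  let ?S = "\<Sum>s\<in>UNIV. (pmf P0 s - pmf P s) * V s"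
  have "\<bar>?S\<bar> \<le> (\<Sum>s\<in>UNIV. \<bar>pmf P s - pmf P0 s\<bar> * B)"
    by (rule order_trans[OF sum_abs sum_mono])
       (use assms in \<open>auto simp: abs_mult abs_minus_commute intro!: mult_mono\<close>)
  also have "\<dots> \<le> \<Delta> * B"
    using transition_close order_trans[OF assms(1) assms(2)]
    by (simp add: sum_distrib_right[symmetric] mult_right_mono)
  finally have S: "\<bar>?S\<bar> \<le> B * \<Delta>" by (simp add: mult.commute)
  have "\<bar>(mean_reward R0 - mean_reward R) + ?S\<bar> \<le> \<bar>mean_reward R0 - mean_reward R\<bar> + \<bar>?S\<bar>"
    by (rule abs_triangle_ineq)
  also have "\<dots> \<le> (1 + B) * \<Delta>"
    using reward_close S by (simp add: abs_minus_commute distrib_right)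
  finally have bias: "\<bar>(mean_reward R0 - mean_reward R) + ?S\<bar> \<le> (1 + B) * \<Delta>" .
  have "w * (mean_reward R + (\<Sum>s\<in>UNIV. pmf P s * V s))
          + (1 - w) * (mean_reward R0 + (\<Sum>s\<in>UNIV. pmf P0 s * V s))
        - (mean_reward R + (\<Sum>s\<in>UNIV. pmf P s * V s))
      = (1 - w) * ((mean_reward R0 - mean_reward R) + ?S)"
    by (simp add: sum_subtractf left_diff_distrib algebra_simps)
  then show ?thesis
    using weight_le_1 bias by (simp add: abs_mult mult_left_mono)
qed

lemma pool_var_weight_pos: "pool_var w n N > 0"
  using pool_var_pos[OF n_pos weight_no_history] .

lemma value_deviation_bound:
  assumes "K \<ge> 1" and V: "\<And>s. 0 \<le> V s" "\<And>s. V s \<le> K - 1" and "L \<ge> 0"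
  shows "S.prob {\<omega>\<in>space \<Omega>. \<bar>r_hat \<omega> - mean_reward R + (\<Sum>s\<in>UNIV. (P_hat \<omega> s - pmf P s) * V s)\<bar>
                   > K * ((1 - w) * \<Delta> + sqrt (L / 2) * sqrt (pool_var w n N))}
         < 2 * exp (- L)"
proof -
  let ?t = "K * sqrt (L / 2) * sqrt (pool_var w n N)"
  let ?X = "\<lambda>\<omega>. 1 * r_hat \<omega> + (\<Sum>s\<in>UNIV. P_hat \<omega> s * V s)"
  let ?m = "w * (1 * mean_reward R + (\<Sum>s\<in>UNIV. pmf P s * V s))
            + (1 - w) * (1 * mean_reward R0 + (\<Sum>s\<in>UNIV. pmf P0 s * V s))"
  let ?m' = "mean_reward R + (\<Sum>s\<in>UNIV. pmf P s * V s)"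
  have "S.prob {\<omega>\<in>space \<Omega>. \<bar>?X \<omega> - ?m\<bar> > ?t} < 2 * exp (- 2 * ?t\<^sup>2 / (K\<^sup>2 * pool_var w n N))"
  proof (rule linear_estimate_abs_gt)
    show "1 + V s \<le> K" for s
      using V(2)[of s] by simp
  qed (use assms pool_var_weight_pos in auto)
  also have "\<dots> = 2 * exp (- L)"
    using pool_var_weight_pos assms(1,4) by (simp add: power_mult_distrib)
  finally have dev: "S.prob {\<omega>\<in>space \<Omega>. \<bar>?X \<omega> - ?m\<bar> > ?t} < 2 * exp (- L)" .
  have "\<bar>?m - ?m'\<bar> \<le> K * ((1 - w) * \<Delta>)"
    using value_mixture_bias[of V "K - 1"] V by (simp add: mult.left_commute)
  from S.prob_abs_diff_gt_shift[OF _ this dev]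
  have "S.prob {\<omega>\<in>space \<Omega>. \<bar>?X \<omega> - ?m'\<bar> > K * ((1 - w) * \<Delta>) + ?t} < 2 * exp (- L)"
    by measurable
  moreover have "r_hat \<omega> + (\<Sum>s\<in>UNIV. P_hat \<omega> s * V s) - ?m'
      = r_hat \<omega> - mean_reward R + (\<Sum>s\<in>UNIV. (P_hat \<omega> s - pmf P s) * V s)" for \<omega>
    by (simp add: sum_subtractf left_diff_distrib)
  ultimately show ?thesis
    by (simp only: mult_1_left distrib_left mult.assoc)
qed

lemma reward_deviation_bound:
  assumes "L \<ge> 0"
  shows "S.prob {\<omega>\<in>space \<Omega>. \<bar>r_hat \<omega> - mean_reward R\<bar>
                   > (1 - w) * \<Delta> + sqrt (L / 2) * sqrt (pool_var w n N)}
         < 2 * exp (- L)"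
  using value_deviation_bound[of 1 "\<lambda>_. 0"] assms by simp

lemma P_hat_measurable [measurable]: "(\<lambda>\<omega>. P_hat \<omega> s) \<in> borel_measurable \<Omega>"
  using linear_estimate_measurable[of 0 "indicator {s}"] by simp

definition P_mix :: "'s \<Rightarrow> real" where
  "P_mix s = w * pmf P s + (1 - w) * pmf P0 s"

lemma P_mix_L1_bias: "(\<Sum>s\<in>UNIV. \<bar>P_mix s - pmf P s\<bar>) \<le> (1 - w) * \<Delta>"
proof -
  have "P_mix s - pmf P s = (1 - w) * (pmf P0 s - pmf P s)" for s
    by (simp add: P_mix_def algebra_simps)
  then have "(\<Sum>s\<in>UNIV. \<bar>P_mix s - pmf P s\<bar>) = (1 - w) * (\<Sum>s\<in>UNIV. \<bar>pmf P s - pmf P0 s\<bar>)"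
    using weight_le_1 by (simp add: abs_mult abs_minus_commute sum_distrib_left)
  then show ?thesis
    using transition_close weight_le_1 by (simp add: mult_left_mono)
qed

lemma subset_deviation_bound:
  assumes "c > 0"
  shows "S.prob {\<omega>\<in>space \<Omega>. (\<Sum>s\<in>A. P_hat \<omega> s - P_mix s) > c}
         < exp (- 2 * c\<^sup>2 / pool_var w n N)"
proof -
  have "{\<omega>\<in>space \<Omega>. (\<Sum>s\<in>A. P_hat \<omega> s - P_mix s) > c}
      = {\<omega>\<in>space \<Omega>. 0 * r_hat \<omega> + (\<Sum>s\<in>UNIV. P_hat \<omega> s * indicator A s)
          - (w * (0 * mean_reward R + (\<Sum>s\<in>UNIV. pmf P s * indicator A s))
             + (1 - w) * (0 * mean_reward R0 + (\<Sum>s\<in>UNIV. pmf P0 s * indicator A s))) > c}"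
    by (simp add: P_mix_def sum_subtractf sum.distrib sum_distrib_left)
  also have "S.prob \<dots> < exp (- 2 * c\<^sup>2 / (1\<^sup>2 * pool_var w n N))"
    by (rule linear_estimate_gt) (use assms in auto)
  finally show ?thesis
    by simp
qed

text \<open>Both \<open>P_hat \<omega>\<close> and \<open>P_mix\<close> sum to 1, so their \<open>L\<^sub>1\<close> distance is twice the excess mass
  of \<open>P_hat \<omega>\<close> on the set where it exceeds \<open>P_mix\<close>.\<close>

lemma L1_deviation_imp_subset_deviation:
  assumes "(\<Sum>s\<in>UNIV. \<bar>P_hat \<omega> s - pmf P s\<bar>) > (1 - w) * \<Delta> + c"
  shows "(\<Sum>s\<in>{s. P_hat \<omega> s \<ge> P_mix s}. P_hat \<omega> s - P_mix s) > c / 2"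
proof -
  let ?x = "\<lambda>s. P_hat \<omega> s - P_mix s"
  have "(\<Sum>s\<in>UNIV. \<bar>P_hat \<omega> s - pmf P s\<bar>) \<le> (\<Sum>s\<in>UNIV. \<bar>?x s\<bar> + \<bar>P_mix s - pmf P s\<bar>)"
    by (intro sum_mono) arith
  with assms P_mix_L1_bias have "(\<Sum>s\<in>UNIV. \<bar>?x s\<bar>) > c"
    by (simp add: sum.distrib)
  moreover have "(\<Sum>s\<in>UNIV. ?x s) = 0"
    using sum_P_hat
    by (simp add: P_mix_def sum_subtractf sum.distrib sum_distrib_left[symmetric] sum_pmf_eq_1)
  ultimately show ?thesis
    by (simp add: sum_abs_eq_twice_sum_nonneg)
qed

lemma transition_deviation_bound:
  assumes "L \<ge> 0"
  defines "t \<equiv> sqrt (2 * (real CARD('s) * ln 2 + L))"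
  shows "S.prob {\<omega>\<in>space \<Omega>. (\<Sum>s\<in>UNIV. \<bar>P_hat \<omega> s - pmf P s\<bar>) > (1 - w) * \<Delta> + t * sqrt (pool_var w n N)}
         < exp (- L)"
proof -
  let ?c = "t * sqrt (pool_var w n N)"
  define E where "E A = {\<omega>\<in>space \<Omega>. (\<Sum>s\<in>A. P_hat \<omega> s - P_mix s) > ?c / 2}" for A
  have "?c > 0"
    using assms(1) pool_var_weight_pos by (simp add: t_def add_pos_nonneg)
  have "S.prob {\<omega>\<in>space \<Omega>. (\<Sum>s\<in>UNIV. \<bar>P_hat \<omega> s - pmf P s\<bar>) > (1 - w) * \<Delta> + ?c}
      \<le> S.prob (\<Union>A\<in>UNIV. E A)"
    using L1_deviation_imp_subset_deviation by (intro S.finite_measure_mono) (auto simp: E_def)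
  also have "\<dots> \<le> (\<Sum>A\<in>UNIV. S.prob (E A))"
    by (intro measure_UNION_le) (auto simp: E_def)
  also have "\<dots> < (\<Sum>A\<in>(UNIV :: 's set set). exp (- 2 * (?c / 2)\<^sup>2 / pool_var w n N))"
    unfolding E_def using \<open>?c > 0\<close> by (intro sum_strict_mono subset_deviation_bound) auto
  also have "\<dots> = 2 ^ CARD('s) * exp (- (real CARD('s) * ln 2 + L))"
    using card_Pow[of "UNIV :: 's set"] assms(1) pool_var_weight_pos
    by (simp add: t_def power_divide power_mult_distrib) (simp add: field_simps)
  also have "\<dots> = exp (- L)"
    unfolding minus_add_distrib exp_add exp_minus by (simp add: exp_of_nat_mult)
  finally show ?thesis .
qed

lemma confidence_radii:
  assumes "L \<ge> 0" and "K \<ge> 1" and "\<And>s. 0 \<le> V s" and "\<And>s. V s \<le> K - 1"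
  defines "eR \<equiv> (1 - w) * \<Delta> + sqrt (L / 2) * sqrt (pool_var w n N)"
    and "eP \<equiv> (1 - w) * \<Delta> + sqrt (2 * (real CARD('s) * ln 2 + L)) * sqrt (pool_var w n N)"
  shows "0 \<le> eR" "0 \<le> eP" "0 \<le> K * eR"
    and "S.prob {\<omega>\<in>space \<Omega>. \<bar>r_hat \<omega> - mean_reward R\<bar> > eR} < 2 * exp (- L)"
    and "S.prob {\<omega>\<in>space \<Omega>. (\<Sum>s\<in>UNIV. \<bar>P_hat \<omega> s - pmf P s\<bar>) > eP} < 2 * exp (- L)"
    and "S.prob {\<omega>\<in>space \<Omega>. \<bar>r_hat \<omega> - mean_reward R + (\<Sum>s\<in>UNIV. (P_hat \<omega> s - pmf P s) * V s)\<bar>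
                   > K * eR} < 2 * exp (- L)"
proof -
  have "0 \<le> \<Delta>"
    using reward_close abs_ge_zero order_trans by blast
  then show "0 \<le> eR" "0 \<le> eP"
    using weight_le_1 pool_var_weight_pos assms(1) by (simp_all add: eR_def eP_def)
  then show "0 \<le> K * eR"
    using assms(2) by simp
  show "S.prob {\<omega>\<in>space \<Omega>. \<bar>r_hat \<omega> - mean_reward R\<bar> > eR} < 2 * exp (- L)"
    unfolding eR_def by (rule reward_deviation_bound[OF assms(1)])
  show "S.prob {\<omega>\<in>space \<Omega>. (\<Sum>s\<in>UNIV. \<bar>P_hat \<omega> s - pmf P s\<bar>) > eP} < 2 * exp (- L)"
    unfolding eP_def
    by (rule order.strict_trans[OF transition_deviation_bound[OF assms(1)]]) simp
  show "S.prob {\<omega>\<in>space \<Omega>. \<bar>r_hat \<omega> - mean_reward R + (\<Sum>s\<in>UNIV. (P_hat \<omega> s - pmf P s) * V s)\<bar>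
                  > K * eR} < 2 * exp (- L)"
    unfolding eR_def by (rule value_deviation_bound[OF assms(2-4,1)])
qed

end

lemma pooling_root:
  fixes n N \<Delta> c :: real
  assumes "n > 0" "N > 0" and small: "\<Delta>\<^sup>2 * n < c\<^sup>2"
  shows "(sqrt ((N + n) * c\<^sup>2 - \<Delta>\<^sup>2 * N * n))\<^sup>2 = (N + n) * c\<^sup>2 - \<Delta>\<^sup>2 * N * n"
    and "\<Delta> * n < sqrt ((N + n) * c\<^sup>2 - \<Delta>\<^sup>2 * N * n)"
proof -
  have rad: "(\<Delta> * n)\<^sup>2 < (N + n) * c\<^sup>2 - \<Delta>\<^sup>2 * N * n"
    using mult_strict_left_mono[OF small, of "N + n"] assms(1,2)
    by (simp add: algebra_simps power2_eq_square)
  then show "(sqrt ((N + n) * c\<^sup>2 - \<Delta>\<^sup>2 * N * n))\<^sup>2 = (N + n) * c\<^sup>2 - \<Delta>\<^sup>2 * N * n"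
    by (intro real_sqrt_pow2 order_trans[OF zero_le_power2 less_imp_le])
  show "\<Delta> * n < sqrt ((N + n) * c\<^sup>2 - \<Delta>\<^sup>2 * N * n)"
    using rad by (rule real_less_rsqrt)
qed

lemma pooling_radius_less:
  fixes n N \<Delta> c :: real
  assumes "n > 0" "N > 0" "\<Delta> > 0" "c > 0" and small: "\<Delta>\<^sup>2 * n < c\<^sup>2"
  shows "(N * \<Delta> + sqrt ((N + n) * c\<^sup>2 - \<Delta>\<^sup>2 * N * n)) / (N + n) < c / sqrt n"
proof -
  define D where "D = sqrt ((N + n) * c\<^sup>2 - \<Delta>\<^sup>2 * N * n)"
  define q where "q = sqrt n"
  have D2: "D\<^sup>2 = (N + n) * c\<^sup>2 - \<Delta>\<^sup>2 * N * n"
    unfolding D_def by (rule pooling_root(1)[OF assms(1,2) small])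
  have q: "q > 0" "q\<^sup>2 = n"
    using assms(1) by (simp_all add: q_def)
  have "(q * \<Delta>)\<^sup>2 < c\<^sup>2"
    using small q(2) by (simp add: power_mult_distrib mult.commute)
  then have "q * \<Delta> < c"
    using assms(4) by - (rule power2_less_imp_less; simp)
  then have "N * (q * \<Delta>) < N * c"
    using assms(2) by simp
  moreover have "0 < c * n"
    using assms(1,4) by simp
  ultimately have pos: "0 < (N + n) * c - q * N * \<Delta>"
    by (simp add: algebra_simps)
  have "((N + n) * c - q * N * \<Delta>)\<^sup>2 - (q * D)\<^sup>2 = N * (N + n) * (c - q * \<Delta>)\<^sup>2"
    by (simp add: power2_diff power_mult_distrib q(2) D2) (simp add: algebra_simps power2_eq_square)
  also have "\<dots> > 0"
    using \<open>q * \<Delta> < c\<close> assms(1,2) by simp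
  finally have "q * D < (N + n) * c - q * N * \<Delta>"
    using pos by - (rule power2_less_imp_less; simp)
  then have "(N * \<Delta> + D) * q < c * (N + n)"
    by (simp add: algebra_simps)
  then show ?thesis
    unfolding D_def[symmetric] q_def[symmetric] using q(1) assms(1,2)
    by (simp add: pos_divide_less_eq less_divide_eq mult.commute)
qed

lemma pooling_weight_split:
  fixes n N \<Delta> D :: real
  assumes "n > 0" "N > 0" "D > 0"
  defines "lam \<equiv> (n + N * n * \<Delta> / D) / (N + n)"
  shows "lam = n * (D + N * \<Delta>) / (D * (N + n))"
    and "1 - lam = N * (D - n * \<Delta>) / (D * (N + n))"
proof -
  have "D * (N + n) > 0"
    using assms(1-3) by simp
  then show lam: "lam = n * (D + N * \<Delta>) / (D * (N + n))"
    using assms(3) by (simp add: lam_def field_simps)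
  then show "1 - lam = N * (D - n * \<Delta>) / (D * (N + n))"
    using \<open>D * (N + n) > 0\<close> by (simp add: field_simps)
qed

lemma pooling_weight_interior:
  fixes n N \<Delta> c :: real
  assumes "n > 0" "N > 0" "\<Delta> > 0" and small: "\<Delta>\<^sup>2 * n < c\<^sup>2"
  defines "D \<equiv> sqrt ((N + n) * c\<^sup>2 - \<Delta>\<^sup>2 * N * n)"
  defines "lam \<equiv> (n + N * n * \<Delta> / D) / (N + n)"
  shows "0 < lam" "lam < 1"
    and "lam\<^sup>2 / n + (1 - lam)\<^sup>2 / N = (c / D)\<^sup>2"
proof -
  note D2 = pooling_root(1)[OF assms(1,2) small, folded D_def]
  have "\<Delta> * n < D" "D > 0"
    using pooling_root(2)[OF assms(1,2) small, folded D_def] assms(1,3)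
    by (auto intro: order.strict_trans[rotated])
  note split = pooling_weight_split[OF assms(1,2) \<open>D > 0\<close>, of \<Delta>, folded lam_def]
  have "N + n > 0" "D * (N + n) > 0"
    using \<open>D > 0\<close> assms(1,2) by simp_all
  note den = \<open>D > 0\<close> this
  show "0 < lam"
    unfolding split(1) using den assms(1-3) by (intro divide_pos_pos mult_pos_pos add_pos_pos) auto
  have "0 < 1 - lam"
    unfolding split(2) using den \<open>\<Delta> * n < D\<close> assms(2)
    by (intro divide_pos_pos mult_pos_pos) (auto simp: mult.commute)
  then show "lam < 1" by simp
  have "lam\<^sup>2 / n + (1 - lam)\<^sup>2 / N = (n * (D + N * \<Delta>)\<^sup>2 + N * (D - n * \<Delta>)\<^sup>2) / (D * (N + n))\<^sup>2"
  proof -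
    have *: "(n * A / Y)\<^sup>2 / n + (N * B / Y)\<^sup>2 / N = (n * A\<^sup>2 + N * B\<^sup>2) / Y\<^sup>2"
      if "Y \<noteq> 0" for A B Y
      using that assms(1,2) by (simp add: field_simps power2_eq_square)
    show ?thesis
      unfolding split(2) unfolding split(1) by (rule *) (use den in simp)
  qed
  also have "n * (D + N * \<Delta>)\<^sup>2 + N * (D - n * \<Delta>)\<^sup>2 = (N + n) * (D\<^sup>2 + n * N * \<Delta>\<^sup>2)"
    by (simp add: algebra_simps power2_eq_square)
  also have "D\<^sup>2 + n * N * \<Delta>\<^sup>2 = (N + n) * c\<^sup>2"
    using D2 by simp
  also have "(N + n) * ((N + n) * c\<^sup>2) / (D * (N + n))\<^sup>2 = (c / D)\<^sup>2"
    using den by (simp add: power_mult_distrib power_divide power2_eq_square[of "N + n"])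
  finally show "lam\<^sup>2 / n + (1 - lam)\<^sup>2 / N = (c / D)\<^sup>2" .
qed

lemma pooling_weight_radius_less:
  fixes n N \<Delta> c :: real
  assumes "n > 0" "N > 0" "\<Delta> > 0" "c > 0" and small: "\<Delta>\<^sup>2 * n < c\<^sup>2"
  defines "D \<equiv> sqrt ((N + n) * c\<^sup>2 - \<Delta>\<^sup>2 * N * n)"
  defines "lam \<equiv> (n + N * n * \<Delta> / D) / (N + n)"
  shows "(1 - lam) * \<Delta> + c * (c / D) < c / sqrt n"
proof -
  note D2 = pooling_root(1)[OF assms(1,2) small, folded D_def]
  have "D > 0"
    using pooling_root(2)[OF assms(1,2) small, folded D_def] assms(1,3)
    by (auto intro: order.strict_trans[rotated])
  have "N + n > 0" "D * (N + n) > 0"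
    using \<open>D > 0\<close> assms(1,2) by simp_all
  note den = \<open>D > 0\<close> this
  have "c * (c / D) = (N + n) * c\<^sup>2 / (D * (N + n))"
    using den by (simp add: power2_eq_square)
  then have "(1 - lam) * \<Delta> + c * (c / D) = (N * \<Delta> * (D - n * \<Delta>) + (N + n) * c\<^sup>2) / (D * (N + n))"
    unfolding pooling_weight_split(2)[OF assms(1,2) \<open>D > 0\<close>, of \<Delta>, folded lam_def]
    by (simp add: add_divide_distrib mult_ac)
  also have "N * \<Delta> * (D - n * \<Delta>) + (N + n) * c\<^sup>2 = D * (N * \<Delta> + D)"
    using D2 by (simp add: algebra_simps power2_eq_square)
  also have "D * (N * \<Delta> + D) / (D * (N + n)) = (N * \<Delta> + D) / (N + n)"
    using den by simp
  also have "\<dots> < c / sqrt n"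
    unfolding D_def by (rule pooling_radius_less[OF assms(1-5)])
  finally show ?thesis .
qed

lemma lambda_DP_eq_1:
  assumes "n \<ge> 1" and "\<not> (real n < L / (2 * \<Delta>\<^sup>2) \<and> N \<ge> 1)"
  shows "lambda_DP L \<Delta> n N = 1"
  using assms by (cases "N = 0") (auto simp: lambda_DP_def)

lemma sqrt_pool_var_1: "n \<ge> 1 \<Longrightarrow> sqrt (pool_var 1 n N) = 1 / sqrt n"
  by (simp add: pool_var_def real_sqrt_divide)

lemma lambda_DP_interior:
  assumes "\<Delta> > 0" "n \<ge> 1" "N \<ge> 1" and small: "real n < L / (2 * \<Delta>\<^sup>2)"
  defines "lam \<equiv> lambda_DP L \<Delta> n N"
  shows "0 < lam" "lam < 1"
    and "(1 - lam) * \<Delta> + sqrt (L / 2) * sqrt (pool_var lam n N) < sqrt (L / 2) / sqrt n"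
    and "sqrt (pool_var lam n N) < 1 / sqrt n"
proof -
  let ?c = "sqrt (L / 2)"
  have "0 < real n * (2 * \<Delta>\<^sup>2)"
    using assms(1,2) by simp
  also have "real n * (2 * \<Delta>\<^sup>2) < L"
    using small assms(1) by (simp add: pos_less_divide_eq)
  finally have "L > 0" .
  then have c: "?c > 0" "?c\<^sup>2 = L / 2"
    by simp_all
  have "\<Delta>\<^sup>2 * real n < ?c\<^sup>2"
    using small assms(1) by (simp add: c(2) field_simps)
  note W = pooling_weight_interior[OF _ _ assms(1) this]
    and W' = pooling_weight_radius_less[OF _ _ assms(1) c(1) this]
  have lam: "lam = (real n + real N * real n * \<Delta> / sqrt ((real N + real n) * ?c\<^sup>2 - \<Delta>\<^sup>2 * real N * real n))
                   / (real N + real n)"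
    using small by (simp add: lam_def lambda_DP_def c(2))
  show "0 < lam" "lam < 1"
    unfolding lam using W(1,2) assms(2,3) by simp_all
  let ?D = "sqrt ((real N + real n) * ?c\<^sup>2 - \<Delta>\<^sup>2 * real N * real n)"
  have "0 < \<Delta> * real n"
    using assms(1,2) by simp
  also have "\<Delta> * real n < ?D"
    using pooling_root(2)[OF _ _ \<open>\<Delta>\<^sup>2 * real n < ?c\<^sup>2\<close>] assms(2,3) by simp
  finally have "sqrt (pool_var lam n N) = ?c / ?D"
    using W(3) assms(2,3) c(1) unfolding pool_var_def lam by simp
  then show radius: "(1 - lam) * \<Delta> + ?c * sqrt (pool_var lam n N) < ?c / sqrt n"
    unfolding lam using W' assms(2,3) by simp
  have "0 < (1 - lam) * \<Delta>"
    using \<open>lam < 1\<close> assms(1) by simp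
  with radius have "?c * sqrt (pool_var lam n N) < ?c * (1 / sqrt n)"
    by simp
  then show "sqrt (pool_var lam n N) < 1 / sqrt n"
    using c(1) mult_less_cancel_left_pos by blast
qed

lemma lambda_DP_radius_less:
  assumes "\<Delta> > 0" "n \<ge> 1" "N \<ge> 1" "real n < L / (2 * \<Delta>\<^sup>2)" and "L / 2 \<le> C"
  shows "(1 - lambda_DP L \<Delta> n N) * \<Delta> + sqrt C * sqrt (pool_var (lambda_DP L \<Delta> n N) n N)
         < sqrt (C / real n)"
proof -
  let ?\<sigma> = "sqrt (pool_var (lambda_DP L \<Delta> n N) n N)"
  have "(sqrt C - sqrt (L / 2)) * ?\<sigma> \<le> (sqrt C - sqrt (L / 2)) * (1 / sqrt n)"
    using lambda_DP_interior(4)[OF assms(1-4)] assms(5) by (intro mult_left_mono) simp_all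
  then show ?thesis
    using lambda_DP_interior(3)[OF assms(1-4)]
    by (simp add: algebra_simps add_divide_distrib real_sqrt_divide)
qed

lemma lambda_DP_radius_le:
  assumes "\<Delta> > 0" "n \<ge> 1" and "L / 2 \<le> C"
  shows "(1 - lambda_DP L \<Delta> n N) * \<Delta> + sqrt C * sqrt (pool_var (lambda_DP L \<Delta> n N) n N)
         \<le> sqrt (C / real n)"
proof (cases "real n < L / (2 * \<Delta>\<^sup>2) \<and> N \<ge> 1")
  case True
  then show ?thesis
    using lambda_DP_radius_less assms by (simp add: less_imp_le)
next
  case False
  then show ?thesis
    using assms(2) by (simp add: lambda_DP_eq_1 sqrt_pool_var_1 real_sqrt_divide)
qed

lemma lambda_DP_weight:
  assumes "\<Delta> > 0" "n \<ge> 1"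
  shows "0 \<le> lambda_DP L \<Delta> n N" "lambda_DP L \<Delta> n N \<le> 1" "N = 0 \<Longrightarrow> lambda_DP L \<Delta> n N = 1"
  using lambda_DP_interior(1,2)[OF assms, of N L] lambda_DP_eq_1[OF assms(2), of L \<Delta> N]
  by (cases "real n < L / (2 * \<Delta>\<^sup>2) \<and> N \<ge> 1"; force)+

lemma Qrem_bounded:
  assumes "\<And>h s a. 0 \<le> r h s a \<and> r h s a \<le> 1"
  shows "0 \<le> Qrem r P m h s a \<and> Qrem r P m h s a \<le> real m"
proof (induction m arbitrary: h s a)
  case 0
  then show ?case by simp
next
  case (Suc m)
  define M where "M s' = (MAX y\<in>UNIV. Qrem r P m (Suc h) s' y)" for s'
  have M: "0 \<le> M s' \<and> M s' \<le> real m" for s'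
    unfolding M_def using Suc.IH by (auto simp: Max_ge_iff Max_le_iff)
  have "(\<Sum>s'\<in>UNIV. pmf (P h s a) s' * M s') \<le> (\<Sum>s'\<in>UNIV. pmf (P h s a) s' * real m)"
    by (intro sum_mono mult_left_mono) (auto simp: M)
  also have "\<dots> = real m"
    by (simp add: sum_distrib_right[symmetric] sum_pmf_eq_1)
  finally have "(\<Sum>s'\<in>UNIV. pmf (P h s a) s' * M s') \<le> real m" .
  moreover have "0 \<le> (\<Sum>s'\<in>UNIV. pmf (P h s a) s' * M s')"
    by (intro sum_nonneg mult_nonneg_nonneg) (auto simp: M)
  ultimately show ?case
    using assms[of h s a] unfolding M_def by simp
qed

lemma Vstar_bounded:
  assumes "\<And>h s a. 0 \<le> r h s a \<and> r h s a \<le> 1" and "h \<le> H"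
  shows "0 \<le> Vstar H r P (h + 1) s \<and> Vstar H r P (h + 1) s \<le> real H - real h"
proof -
  have "0 \<le> Qstar H r P (h + 1) s y \<and> Qstar H r P (h + 1) s y \<le> real H - real h" for y
    using Qrem_bounded[OF assms(1), where P = P and m = "H + 1 - (h + 1)" and h = "h + 1"] assms(2)
    unfolding Qstar_def by (auto simp: of_nat_diff)
  then show ?thesis
    unfolding Vstar_def by (auto simp: Max_ge_iff Max_le_iff)
qed

theorem theorem1:
  fixes H T n N :: nat and \<delta> \<Delta> :: real
    and R R0 :: "nat \<Rightarrow> 's::finite \<Rightarrow> 'a::finite \<Rightarrow> real measure"
    and P P0 :: "nat \<Rightarrow> 's \<Rightarrow> 'a \<Rightarrow> 's pmf"
    and h :: nat and s :: 's and a :: 'a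
  defines "L \<equiv> ln (2 * real H * real CARD('s) * real CARD('a) * real T / \<delta>)"
  defines "r \<equiv> (\<lambda>h s a. mean_reward (R h s a))"
  defines "r0 \<equiv> (\<lambda>h s a. mean_reward (R0 h s a))"
  assumes "H > 0" and "T > 0" and "\<delta> > 0"
    and "\<delta> \<le> 2 * real H * real CARD('s) * real CARD('a) * real T"
    and "\<And>h s a. prob_space (R h s a)" and "\<And>h s a. sets (R h s a) = sets borel"
    and "\<And>h s a. AE x in R h s a. 0 \<le> x \<and> x \<le> 1"
    and "\<And>h s a. prob_space (R0 h s a)" and "\<And>h s a. sets (R0 h s a) = sets borel"
    and "\<And>h s a. AE x in R0 h s a. 0 \<le> x \<and> x \<le> 1"
    and "\<Delta> > 0"
    and "\<And>h s a. h \<in> {1..H} \<Longrightarrow> \<bar>r h s a - r0 h s a\<bar> \<le> \<Delta>"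
    and "\<And>h s a. h \<in> {1..H} \<Longrightarrow> (\<Sum>s'\<in>UNIV. \<bar>pmf (P h s a) s' - pmf (P0 h s a) s'\<bar>) \<le> \<Delta>"
    and "h \<in> {1..H}" and "n \<ge> 1"
  shows "\<exists>eR eP eV.
     let \<Omega> = sample_space n N (R h s a) (P h s a) (R0 h s a) (P0 h s a);
         V = Vstar H r P (h + 1);
         bnd = \<delta> / (real H * real CARD('s) * real CARD('a) * real T)
     in 0 \<le> eR \<and> 0 \<le> eP \<and> 0 \<le> eV
      \<and> measure \<Omega> {\<omega> \<in> space \<Omega>. \<bar>r_DP L \<Delta> n N \<omega> - r h s a\<bar> > eR} < bnd
      \<and> measure \<Omega> {\<omega> \<in> space \<Omega>.
            (\<Sum>s'\<in>UNIV. \<bar>P_DP L \<Delta> n N \<omega> s' - pmf (P h s a) s'\<bar>) > eP} < bnd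
      \<and> measure \<Omega> {\<omega> \<in> space \<Omega>.
            \<bar>r_DP L \<Delta> n N \<omega> - r h s a
              + (\<Sum>s'\<in>UNIV. (P_DP L \<Delta> n N \<omega> s' - pmf (P h s a) s') * V s')\<bar> > eV} < bnd
      \<and> eR \<le> sqrt (L / (2 * real n))
      \<and> eP \<le> sqrt (2 * (real CARD('s) * ln 2 + L) / real n)
      \<and> eV \<le> real H * sqrt (L / (2 * real n))
      \<and> (real n < L / (2 * \<Delta>^2) \<and> N \<ge> 1 \<longrightarrow>
           eR < sqrt (L / (2 * real n))
         \<and> eP < sqrt (2 * (real CARD('s) * ln 2 + L) / real n)
         \<and> eV < real H * sqrt (L / (2 * real n)))"
proof -
  let ?C = "2 * (real CARD('s) * ln 2 + L)"
  define lam where "lam = lambda_DP L \<Delta> n N"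
  have "0 < real H * real CARD('s) * real CARD('a) * real T"
    using assms(4,5) by simp
  then have "L \<ge> 0" and bnd: "\<delta> / (real H * real CARD('s) * real CARD('a) * real T) = 2 * exp (- L)"
    using assms(6,7) by (simp_all add: L_def exp_minus field_simps)
  interpret pooled_estimation "R h s a" "R0 h s a" "P h s a" "P0 h s a" n N lam \<Delta>
  proof (intro pooled_estimation.intro reward_distribution.intro pooled_estimation_axioms.intro)
    show "\<bar>mean_reward (R h s a) - mean_reward (R0 h s a)\<bar> \<le> \<Delta>"
      using assms(15)[OF assms(17)] by (simp add: r_def r0_def)
  qed (use assms(8-13,16-18) lambda_DP_weight[OF assms(14,18)] in \<open>simp_all add: lam_def\<close>)
  have r_unit: "0 \<le> r h' s' a' \<and> r h' s' a' \<le> 1" for h' s' a'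
    using reward_distribution.mean_reward_bounds[of "R h' s' a'"] assms(8-10)
    by (simp add: r_def reward_distribution_def)
  have V: "0 \<le> Vstar H r P (h + 1) s' \<and> Vstar H r P (h + 1) s' \<le> real H - 1" for s'
    using Vstar_bounded[where r = r and h = h and H = H and P = P and s = s', OF r_unit] assms(17)
    by auto
  note conf = confidence_radii[OF \<open>L \<ge> 0\<close>, of "real H" "Vstar H r P (h + 1)"]
  have estimators: "r_DP L \<Delta> n N = r_hat" "P_DP L \<Delta> n N = P_hat"
    by (simp_all add: fun_eq_iff r_DP_def r_hat_def P_DP_def P_hat_def flip: lam_def)
  show ?thesis
    unfolding Let_def sample_space_eq estimators bnd
    using conf V assms(4) \<open>L \<ge> 0\<close>
      lambda_DP_radius_le[OF assms(14,18), of L "L / 2" N]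
      lambda_DP_radius_le[OF assms(14,18), of L ?C N]
      lambda_DP_radius_less[OF assms(14,18), of N L "L / 2"]
      lambda_DP_radius_less[OF assms(14,18), of N L ?C]
    by (intro exI conjI impI) (auto simp: r_def lam_def intro: mult_left_mono)
qed

end
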